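(* For every $\epsilon$, the class $\mathbf{RMM}_\epsilon$ is closed under complement, under inverse homomorphisms and under word quotients. That is, if $L\subseteq\Sigma^*$ belongs to $\mathbf{RMM}_\epsilon$, then so do $\Sigma^*\setminus L$, $h^{-1}(L)=\{x\in\Sigma^*: h(x)\in L\}$ for every monoid homomorphism $h:\Sigma^*\to\Sigma^*$, and $w^{-1}L=\{x: wx\in L\}$ and $Lw^{-1}=\{x: xw\in L\}$ for every $w\in\Sigma^*$.
   Context: A measure-many quantum finite automaton (MM-QFA) over a finite alphabet $\Sigma$ is a tuple $M=(Q,\Sigma,\{U_\sigma\}_{\sigma\in\Sigma\cup\{\$\}},q_0,Q_{acc},Q_{rej})$, where $Q$ is a finite set of states indexing an orthonormal basis $\{|q\rangle\}$ of $\mathbb{C}^Q$, $\$\notin\Sigma$ is an end-marker, each $U_\sigma$ is unitary, $q_0$ is the initial state, and $Q$ is partitioned into accepting halting states $Q_{acc}$, rejecting halting states $Q_{rej}$ and non-halting states $Q_{non}$; let $P_{acc},P_{rej},P_{non}$ be the orthogonal projections onto the spans of the corresponding basis vectors. On input $x\in\Sigma^*$ the machine processes the symbols of $x\$$ one at a time, maintaining a triple $(\psi,p_{acc},p_{rej})$ initialised to $(|q_0\rangle,0,0)$: on reading $\sigma$ it sets $\psi'=U_\sigma\psi$, adds $\|P_{acc}\psi'\|^2$ to $p_{acc}$ and $\|P_{rej}\psi'\|^2$ to $p_{rej}$, and replaces $\psi$ by $P_{non}\psi'$. The acceptance probability $p_M(x)$ is the final value of $p_{acc}$. $M$ accepts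 $L$ with cut-point $\lambda$ and margin $\epsilon>0$ if $p_M(x)>\lambda+\epsilon$ for $x\in L$ and $p_M(x)<\lambda-\epsilon$ for $x\notin L$. $\mathbf{RMM}_\epsilon$ is the class of languages accepted by some MM-QFA (with some cut-point) with margin at least $\epsilon$. *)

theory Defs
  imports Complex_Main
begin

text \<open>The alphabet is a finite type 'a;
the end-marker is None, a letter s is Some s.  The state set Q is {0..<dim M},
vectors are functions nat => complex (only indices < dim M matter), and the
unitaries are dim x dim complex matrices given as functions.\<close>

record 'a mmqfa =
  dim  :: nat
  umat :: "'a option \<Rightarrow> nat \<Rightarrow> nat \<Rightarrow> complex"
  init :: nat
  Qacc :: "nat set"
  Qrej :: "nat set"

definition unitary_on :: "nat \<Rightarrow> (nat \<Rightarrow> nat \<Rightarrow> complex) \<Rightarrow> bool" where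
  "unitary_on n U \<longleftrightarrow>
     (\<forall>i<n. \<forall>j<n. (\<Sum>k<n. cnj (U k i) * U k j) = (if i = j then 1 else 0))"

definition wf_mmqfa :: "'a mmqfa \<Rightarrow> bool" where
  "wf_mmqfa M \<longleftrightarrow> init M < dim M \<and> Qacc M \<subseteq> {..<dim M} \<and> Qrej M \<subseteq> {..<dim M}
     \<and> Qacc M \<inter> Qrej M = {} \<and> (\<forall>\<sigma>. unitary_on (dim M) (umat M \<sigma>))"

definition mm_step :: "'a mmqfa \<Rightarrow> (nat \<Rightarrow> complex) \<times> real \<times> real \<Rightarrow> 'a option
                        \<Rightarrow> (nat \<Rightarrow> complex) \<times> real \<times> real" where
  "mm_step M st \<sigma> =
     (let (\<psi>, pa, pr) = st;
          \<psi>' = (\<lambda>i. \<Sum>j<dim M. umat M \<sigma> i j * \<psi> j)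
      in ((\<lambda>i. if i < dim M \<and> i \<notin> Qacc M \<and> i \<notin> Qrej M then \<psi>' i else 0),
          pa + (\<Sum>i\<in>Qacc M. (cmod (\<psi>' i))\<^sup>2),
          pr + (\<Sum>i\<in>Qrej M. (cmod (\<psi>' i))\<^sup>2)))"

definition acc_prob :: "'a mmqfa \<Rightarrow> 'a list \<Rightarrow> real" where
  "acc_prob M x =
     fst (snd (foldl (mm_step M) ((\<lambda>i. if i = init M then 1 else 0), 0, 0)
                     (map Some x @ [None])))"

definition accepts_with :: "'a mmqfa \<Rightarrow> 'a list set \<Rightarrow> real \<Rightarrow> real \<Rightarrow> bool" where
  "accepts_with M L c \<epsilon> \<longleftrightarrow> \<epsilon> > 0 \<and>
     (\<forall>x. (x \<in> L \<longrightarrow> acc_prob M x > c + \<epsilon>) \<and> (x \<notin> L \<longrightarrow> acc_prob M x < c - \<epsilon>))"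

definition RMM :: "real \<Rightarrow> ('a::finite) list set set" where
  "RMM \<epsilon> = {L. \<exists>M c \<epsilon>'. wf_mmqfa M \<and> \<epsilon>' \<ge> \<epsilon> \<and> accepts_with M L c \<epsilon>'}"

definition monoid_hom :: "('a list \<Rightarrow> 'a list) \<Rightarrow> bool" where
  "monoid_hom h \<longleftrightarrow> h [] = [] \<and> (\<forall>x y. h (x @ y) = h x @ h y)"

end

(* If M accepts L with cut-point c and margin e, each closure property is witnessed by a machine
   whose acceptance probability is an affine function of that of M with slope 1 or -1, so the
   margin e is preserved.

   Complement: swap accepting and rejecting states and, on the end-marker, also accept the
   amplitude that is still alive.  Since probability is conserved, the acceptance probability
   becomes 1 - p_M(x).

   Inverse homomorphic images and right quotients: one letter of the new machine simulates a
   whole word of M (h(a) for a letter a; w followed by the end-marker for the end-marker) inside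
   a single unitary.  The amplitude halted in the k-th sub-step is moved
   into a fresh k-th copy of the state space, whose copies of accepting and rejecting states halt
   the new machine, so the single measurement after the letter yields exactly the probabilities
   M accumulates on the word.

   Left quotients: after reading w, M is in a sub-normalised state psi having accepted with
   probability a.  Padding psi by one extra coordinate gives a unit vector u orthogonal to a fresh
   basis vector e_s; conjugating all unitaries by the Householder reflection exchanging e_s and u
   yields a machine started in e_s that behaves like M started in psi, with acceptance
   probability p_M(wx) - a. *)

theory Submission
  imports Defs
begin

section \<open>Vectors and matrices\<close>

type_synonym cvec = "nat \<Rightarrow> complex"

type_synonym cmat = "nat \<Rightarrow> nat \<Rightarrow> complex"

definition mat_vec :: "nat \<Rightarrow> cmat \<Rightarrow> cvec \<Rightarrow> cvec" where
  "mat_vec n A x i = (\<Sum>j<n. A i j * x j)"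

definition mat_mul :: "nat \<Rightarrow> cmat \<Rightarrow> cmat \<Rightarrow> cmat" where
  "mat_mul n A B i j = (\<Sum>k<n. A i k * B k j)"

definition id_mat :: cmat where
  "id_mat i j = (if i = j then 1 else 0)"

definition cinner :: "nat \<Rightarrow> cvec \<Rightarrow> cvec \<Rightarrow> complex" where
  "cinner n x y = (\<Sum>j<n. cnj (x j) * y j)"

definition sq_norm :: "nat \<Rightarrow> cvec \<Rightarrow> real" where
  "sq_norm n x = (\<Sum>i<n. (cmod (x i))\<^sup>2)"

lemma sum_lessThan_if_less:
  fixes f :: "nat \<Rightarrow> 'a::comm_monoid_add"
  assumes "n \<le> N"
  shows "(\<Sum>j<N. if j < n then f j else 0) = (\<Sum>j<n. f j)"
proof -
  have "(\<Sum>j<N. if j < n then f j else 0) = (\<Sum>j<n. if j < n then f j else 0)"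
    using assms by (intro sum.mono_neutral_right) auto
  then show ?thesis by simp
qed

lemma id_mat_sym: "id_mat i j = id_mat j i"
  by (simp add: id_mat_def)

lemma cnj_id_mat [simp]: "cnj (id_mat i j) = id_mat i j"
  by (simp add: id_mat_def)

lemma sum_id_mat_mult: "finite A \<Longrightarrow> (\<Sum>j\<in>A. id_mat i j * f j) = (if i \<in> A then f i else 0)"
  by (simp add: id_mat_def if_distrib[of "\<lambda>t. t * _"] cong: if_cong)

lemma sum_mult_id_mat: "finite A \<Longrightarrow> (\<Sum>j\<in>A. f j * id_mat i j) = (if i \<in> A then f i else 0)"
  by (simp add: id_mat_def if_distrib[of "\<lambda>t. _ * t"] cong: if_cong)

lemma sq_norm_id_mat: "k < n \<Longrightarrow> sq_norm n (id_mat k) = 1"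
  by (simp add: sq_norm_def id_mat_def if_distrib[of "\<lambda>z. (cmod z)\<^sup>2"] cong: if_cong)

lemma sq_norm_pad:
  assumes "n \<le> s"
  shows "sq_norm (s + 2) (\<lambda>j. if j < n then \<psi> j else if j = s + 1 then c else 0) = sq_norm n \<psi> + (cmod c)\<^sup>2"
proof -
  have "(cmod (if j < n then \<psi> j else if j = s + 1 then c else 0))\<^sup>2
      = (if j < n then (cmod (\<psi> j))\<^sup>2 else 0) + (if j = s + 1 then (cmod c)\<^sup>2 else 0)" for j
    using assms by auto
  then show ?thesis
    using assms by (simp add: sq_norm_def sum.distrib sum_lessThan_if_less)
qed

lemma cinner_cong:
  "(\<And>k. k < N \<Longrightarrow> x k = x' k) \<Longrightarrow> (\<And>k. k < N \<Longrightarrow> y k = y' k) \<Longrightarrow> cinner N x y = cinner N x' y'"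
  by (simp add: cinner_def)

lemma cinner_self: "cinner n x x = of_real (sq_norm n x)"
  unfolding cinner_def sq_norm_def of_real_sum complex_norm_square by (simp add: mult.commute)

lemma cinner_id_mat_left: "s < N \<Longrightarrow> cinner N (id_mat s) y = y s"
  by (simp add: cinner_def sum_id_mat_mult)

lemma cinner_id_mat_right: "s < N \<Longrightarrow> cinner N x (id_mat s) = cnj (x s)"
  by (simp add: cinner_def sum_mult_id_mat)

lemma cinner_diff_self:
  "cinner N (\<lambda>j. x j - y j) (\<lambda>j. x j - y j) = cinner N x x - cinner N x y - cinner N y x + cinner N y y"
  by (simp add: cinner_def algebra_simps sum_subtractf sum.distrib)

lemma mat_vec_mat_mul: "mat_vec n (mat_mul n A B) x = mat_vec n A (mat_vec n B x)"
proof
  fix i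
  have "mat_vec n (mat_mul n A B) x i = (\<Sum>j<n. \<Sum>k<n. A i k * B k j * x j)"
    by (simp add: mat_vec_def mat_mul_def sum_distrib_right)
  also have "\<dots> = (\<Sum>k<n. \<Sum>j<n. A i k * (B k j * x j))"
    by (subst sum.swap) (simp add: mult.assoc)
  finally show "mat_vec n (mat_mul n A B) x i = mat_vec n A (mat_vec n B x) i"
    by (simp add: mat_vec_def sum_distrib_left)
qed

lemma mat_vec_cong: "(\<And>j. j < n \<Longrightarrow> x j = y j) \<Longrightarrow> mat_vec n A x = mat_vec n A y"
  by (simp add: mat_vec_def fun_eq_iff)

lemma mat_vec_id_mat: "i < n \<Longrightarrow> mat_vec n id_mat x i = x i"
  by (simp add: mat_vec_def sum_id_mat_mult)

lemma unitary_on_cinner: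
  "unitary_on n U \<longleftrightarrow> (\<forall>i<n. \<forall>j<n. cinner n (\<lambda>k. U k i) (\<lambda>k. U k j) = id_mat i j)"
  by (simp add: unitary_on_def cinner_def id_mat_def)

lemma cinner_mat_vec:
  assumes "unitary_on n U"
  shows "cinner n (mat_vec n U x) (mat_vec n U y) = cinner n x y"
proof -
  have "cinner n (mat_vec n U x) (mat_vec n U y)
      = (\<Sum>i<n. \<Sum>j<n. \<Sum>k<n. cnj (x j) * y k * (cnj (U i j) * U i k))"
    by (simp add: cinner_def mat_vec_def sum_distrib_left sum_distrib_right mult_ac)
  also have "\<dots> = (\<Sum>j<n. \<Sum>k<n. \<Sum>i<n. cnj (x j) * y k * (cnj (U i j) * U i k))"
    by (subst sum.swap) (rule sum.cong, simp, subst sum.swap, simp)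
  also have "\<dots> = (\<Sum>j<n. \<Sum>k<n. cnj (x j) * y k * cinner n (\<lambda>i. U i j) (\<lambda>i. U i k))"
    by (simp add: cinner_def sum_distrib_left)
  also have "\<dots> = (\<Sum>j<n. \<Sum>k<n. cnj (x j) * y k * id_mat j k)"
    using assms by (simp add: unitary_on_cinner)
  finally show ?thesis
    by (simp add: sum_mult_id_mat cinner_def)
qed

lemma sq_norm_mat_vec: "unitary_on n U \<Longrightarrow> sq_norm n (mat_vec n U x) = sq_norm n x"
  using cinner_mat_vec[of n U x x] by (simp add: cinner_self)

lemma unitary_onI_cinner:
  assumes "\<And>x y. cinner N (mat_vec N A x) (mat_vec N A y) = cinner N x y"
  shows "unitary_on N A"
proof -
  have col: "mat_vec N A (id_mat i) k = A k i" if "i < N" for i k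
    using that by (simp add: mat_vec_def sum_mult_id_mat)
  have "cinner N (\<lambda>k. A k i) (\<lambda>k. A k j) = id_mat i j" if "i < N" "j < N" for i j
  proof -
    have "cinner N (\<lambda>k. A k i) (\<lambda>k. A k j) = cinner N (id_mat i) (id_mat j)"
      using assms[of "id_mat i" "id_mat j"] col that by (simp add: cinner_def)
    then show ?thesis
      using that by (simp add: cinner_def sum_mult_id_mat id_mat_sym[of _ i])
  qed
  then show ?thesis by (simp add: unitary_on_cinner)
qed

lemma unitary_id_mat: "unitary_on n id_mat"
  by (simp add: unitary_on_cinner cinner_def sum_id_mat_mult id_mat_sym)

lemma unitary_mat_mul:
  assumes "unitary_on n A" and "unitary_on n B"
  shows "unitary_on n (mat_mul n A B)"
proof -
  have "(\<lambda>k. mat_mul n A B k i) = mat_vec n A (\<lambda>k. B k i)" for i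
    by (simp add: mat_mul_def mat_vec_def fun_eq_iff)
  then show ?thesis
    using assms by (simp add: unitary_on_cinner cinner_mat_vec)
qed

definition perm_mat :: "(nat \<Rightarrow> nat) \<Rightarrow> cmat" where
  "perm_mat \<pi> i j = id_mat (\<pi> i) j"

lemma mat_vec_perm_mat: "\<pi> i < N \<Longrightarrow> mat_vec N (perm_mat \<pi>) y i = y (\<pi> i)"
  by (simp add: mat_vec_def perm_mat_def sum_id_mat_mult)

lemma unitary_perm_mat:
  assumes inv: "\<And>i. i < N \<Longrightarrow> \<pi> i < N \<and> \<pi> (\<pi> i) = i"
  shows "unitary_on N (perm_mat \<pi>)"
proof (rule unitary_onI_cinner)
  have bij: "bij_betw \<pi> {..<N} {..<N}"
    using inv by (intro bij_betw_byWitness[where f' = \<pi>]) auto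
  fix x y
  have "cinner N (mat_vec N (perm_mat \<pi>) x) (mat_vec N (perm_mat \<pi>) y)
      = (\<Sum>k<N. cnj (x (\<pi> k)) * y (\<pi> k))"
    using inv by (simp add: cinner_def mat_vec_perm_mat)
  also have "\<dots> = cinner N x y"
    unfolding cinner_def by (rule sum.reindex_bij_betw[OF bij])
  finally show "cinner N (mat_vec N (perm_mat \<pi>) x) (mat_vec N (perm_mat \<pi>) y) = cinner N x y" .
qed

definition mat_extend :: "nat \<Rightarrow> cmat \<Rightarrow> cmat" where
  "mat_extend n U i j = (if i < n \<and> j < n then U i j else id_mat i j)"

lemma mat_vec_mat_extend:
  assumes "n \<le> N" "i < N"
  shows "mat_vec N (mat_extend n U) y i = (if i < n then mat_vec n U y i else y i)"
proof (cases "i < n")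
  case True
  have "mat_vec N (mat_extend n U) y i = (\<Sum>j<N. if j < n then U i j * y j else 0)"
    unfolding mat_vec_def mat_extend_def id_mat_def using True by (intro sum.cong) auto
  also have "\<dots> = (\<Sum>j<n. U i j * y j)"
    using assms(1) by (rule sum_lessThan_if_less)
  finally show ?thesis using True by (simp add: mat_vec_def)
next
  case False
  then have "mat_vec N (mat_extend n U) y i = (\<Sum>j<N. id_mat i j * y j)"
    unfolding mat_vec_def mat_extend_def by (intro sum.cong) auto
  then show ?thesis using assms False by (simp add: sum_id_mat_mult)
qed

lemma cinner_mat_extend:
  assumes "n \<le> N" "unitary_on n U"
  shows "cinner N (mat_vec N (mat_extend n U) x) (mat_vec N (mat_extend n U) y) = cinner N x y"
proof -
  have split: "cinner N x y = cinner n x y + (\<Sum>k\<in>{n..<N}. cnj (x k) * y k)" for x y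
    using assms(1) by (simp add: cinner_def lessThan_atLeast0 sum.atLeastLessThan_concat)
  have "cinner N (mat_vec N (mat_extend n U) x) (mat_vec N (mat_extend n U) y)
      = cinner n (mat_vec n U x) (mat_vec n U y) + (\<Sum>k\<in>{n..<N}. cnj (x k) * y k)"
    unfolding split using assms(1) by (intro arg_cong2[where f = "(+)"] cinner_cong sum.cong)
      (simp_all add: mat_vec_mat_extend)
  then show ?thesis
    by (simp add: cinner_mat_vec[OF assms(2)] split[of x])
qed

lemma unitary_mat_extend: "n \<le> N \<Longrightarrow> unitary_on n U \<Longrightarrow> unitary_on N (mat_extend n U)"
  by (rule unitary_onI_cinner) (simp add: cinner_mat_extend)

definition householder :: "cvec \<Rightarrow> cmat" where
  "householder v i j = id_mat i j - v i * cnj (v j)"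

lemma mat_vec_householder:
  "i < N \<Longrightarrow> mat_vec N (householder v) y i = y i - v i * cinner N v y"
  by (simp add: mat_vec_def householder_def cinner_def algebra_simps sum_subtractf
      sum_mult_id_mat sum_distrib_left)

lemma cinner_householder:
  assumes v: "cinner N v v = 2"
  shows "cinner N (mat_vec N (householder v) x) (mat_vec N (householder v) y) = cinner N x y"
proof -
  define a b where "a = cinner N v x" and "b = cinner N v y"
  have "cinner N (mat_vec N (householder v) x) (mat_vec N (householder v) y)
      = cinner N (\<lambda>k. x k - v k * a) (\<lambda>k. y k - v k * b)"
    by (rule cinner_cong) (simp_all add: mat_vec_householder a_def b_def)
  also have "\<dots> = cinner N x y - b * cinner N x v - cnj a * cinner N v y + cnj a * b * cinner N v v"
    by (simp add: cinner_def sum_subtractf sum.distrib sum_distrib_left algebra_simps)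
  also have "cinner N x v = cnj a"
    by (simp add: a_def cinner_def mult.commute)
  finally show ?thesis
    using v by (simp add: b_def algebra_simps)
qed

lemma unitary_householder: "cinner N v v = 2 \<Longrightarrow> unitary_on N (householder v)"
  by (rule unitary_onI_cinner) (simp add: cinner_householder)

lemma householder_basis_swap:
  assumes "s < N" "sq_norm N u = 1" "u s = 0"
  shows "cinner N (\<lambda>j. id_mat s j - u j) (\<lambda>j. id_mat s j - u j) = 2"
    and "i < N \<Longrightarrow> mat_vec N (householder (\<lambda>j. id_mat s j - u j)) (id_mat s) i = u i"
proof -
  show "cinner N (\<lambda>j. id_mat s j - u j) (\<lambda>j. id_mat s j - u j) = 2"
    using assms unfolding cinner_diff_self
    by (simp add: cinner_id_mat_left cinner_id_mat_right cinner_self sq_norm_id_mat)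
  show "mat_vec N (householder (\<lambda>j. id_mat s j - u j)) (id_mat s) i = u i" if "i < N"
    using assms that by (simp add: mat_vec_householder cinner_id_mat_right id_mat_def)
qed

definition block_swap :: "nat \<Rightarrow> nat \<Rightarrow> nat set \<Rightarrow> nat \<Rightarrow> nat" where
  "block_swap n b A i =
     (if i < n \<and> i \<in> A then b + i else if b \<le> i \<and> i < b + n \<and> i - b \<in> A then i - b else i)"

lemma block_swap_involution:
  assumes "n \<le> b" "b + n \<le> N" "i < N"
  shows "block_swap n b A i < N \<and> block_swap n b A (block_swap n b A i) = i"
  using assms by (auto simp: block_swap_def)

lemma block_swap_low: "i < n \<Longrightarrow> n \<le> b \<Longrightarrow> block_swap n b A i = (if i \<in> A then b + i else i)"
  by (simp add: block_swap_def)

lemma block_swap_block: "q < n \<Longrightarrow> n \<le> b \<Longrightarrow> block_swap n b A (b + q) = (if q \<in> A then q else b + q)"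
  by (simp add: block_swap_def)

lemma block_swap_other: "n \<le> j \<Longrightarrow> j < b \<or> b + n \<le> j \<Longrightarrow> block_swap n b A j = j"
  by (auto simp: block_swap_def)

lemma unitary_block_swap:
  "n \<le> b \<Longrightarrow> b + n \<le> N \<Longrightarrow> unitary_on N (perm_mat (block_swap n b A))"
  by (rule unitary_perm_mat) (rule block_swap_involution)

section \<open>Runs of an MM-QFA\<close>

definition halting :: "'a mmqfa \<Rightarrow> nat set" where
  "halting M = Qacc M \<union> Qrej M"

definition live_states :: "'a mmqfa \<Rightarrow> nat set" where
  "live_states M = {q. q < dim M \<and> q \<notin> halting M}"

definition evolve :: "'a mmqfa \<Rightarrow> cvec \<Rightarrow> 'a option \<Rightarrow> cvec" where
  "evolve M \<psi> \<sigma> = mat_vec (dim M) (umat M \<sigma>) \<psi>"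

definition step_state :: "'a mmqfa \<Rightarrow> cvec \<Rightarrow> 'a option \<Rightarrow> cvec" where
  "step_state M \<psi> \<sigma> i = (if i < dim M \<and> i \<notin> halting M then evolve M \<psi> \<sigma> i else 0)"

definition step_halted :: "'a mmqfa \<Rightarrow> cvec \<Rightarrow> 'a option \<Rightarrow> cvec" where
  "step_halted M \<psi> \<sigma> q = (if q \<in> halting M then evolve M \<psi> \<sigma> q else 0)"

definition step_acc :: "'a mmqfa \<Rightarrow> cvec \<Rightarrow> 'a option \<Rightarrow> real" where
  "step_acc M \<psi> \<sigma> = (\<Sum>i\<in>Qacc M. (cmod (evolve M \<psi> \<sigma> i))\<^sup>2)"

definition step_rej :: "'a mmqfa \<Rightarrow> cvec \<Rightarrow> 'a option \<Rightarrow> real" where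
  "step_rej M \<psi> \<sigma> = (\<Sum>i\<in>Qrej M. (cmod (evolve M \<psi> \<sigma> i))\<^sup>2)"

lemma step_acc_step_halted:
  "step_acc M \<psi> \<sigma> = (\<Sum>q\<in>Qacc M. (cmod (step_halted M \<psi> \<sigma> q))\<^sup>2)"
  by (simp add: step_acc_def step_halted_def halting_def)

fun run_state :: "'a mmqfa \<Rightarrow> cvec \<Rightarrow> 'a option list \<Rightarrow> cvec" where
  "run_state M \<psi> [] = \<psi>"
| "run_state M \<psi> (\<sigma> # xs) = run_state M (step_state M \<psi> \<sigma>) xs"

fun run_acc :: "'a mmqfa \<Rightarrow> cvec \<Rightarrow> 'a option list \<Rightarrow> real" where
  "run_acc M \<psi> [] = 0"
| "run_acc M \<psi> (\<sigma> # xs) = step_acc M \<psi> \<sigma> + run_acc M (step_state M \<psi> \<sigma>) xs"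

fun run_rej :: "'a mmqfa \<Rightarrow> cvec \<Rightarrow> 'a option list \<Rightarrow> real" where
  "run_rej M \<psi> [] = 0"
| "run_rej M \<psi> (\<sigma> # xs) = step_rej M \<psi> \<sigma> + run_rej M (step_state M \<psi> \<sigma>) xs"

lemma foldl_mm_step:
  "foldl (mm_step M) (\<psi>, pa, pr) xs = (run_state M \<psi> xs, pa + run_acc M \<psi> xs, pr + run_rej M \<psi> xs)"
proof (induction xs arbitrary: \<psi> pa pr)
  case (Cons \<sigma> xs)
  have "mm_step M (\<psi>, pa, pr) \<sigma> = (step_state M \<psi> \<sigma>, pa + step_acc M \<psi> \<sigma>, pr + step_rej M \<psi> \<sigma>)"
    by (simp add: mm_step_def step_state_def step_acc_def step_rej_def evolve_def mat_vec_def
        halting_def fun_eq_iff)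
  then show ?case by (simp add: Cons.IH algebra_simps)
qed simp

lemma acc_prob_run_acc: "acc_prob M x = run_acc M (id_mat (init M)) (map Some x @ [None])"
proof -
  have "(\<lambda>i. if i = init M then 1 else 0) = id_mat (init M)"
    by (auto simp: id_mat_def)
  then show ?thesis by (simp add: acc_prob_def foldl_mm_step del: foldl_append)
qed

lemma run_state_append: "run_state M \<psi> (xs @ ys) = run_state M (run_state M \<psi> xs) ys"
  by (induction xs arbitrary: \<psi>) auto

lemma run_acc_append: "run_acc M \<psi> (xs @ ys) = run_acc M \<psi> xs + run_acc M (run_state M \<psi> xs) ys"
  by (induction xs arbitrary: \<psi>) auto

lemma run_rej_append: "run_rej M \<psi> (xs @ ys) = run_rej M \<psi> xs + run_rej M (run_state M \<psi> xs) ys"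
  by (induction xs arbitrary: \<psi>) auto

lemma run_acc_nonneg: "run_acc M \<psi> xs \<ge> 0"
  by (induction xs arbitrary: \<psi>) (auto simp: step_acc_def intro!: add_nonneg_nonneg sum_nonneg)

lemma run_rej_nonneg: "run_rej M \<psi> xs \<ge> 0"
  by (induction xs arbitrary: \<psi>) (auto simp: step_rej_def intro!: add_nonneg_nonneg sum_nonneg)

lemma run_acc_eq_sum:
  "run_acc M \<psi> ws = (\<Sum>k<length ws. step_acc M (run_state M \<psi> (take k ws)) (ws ! k))"
  by (induction ws arbitrary: \<psi>) (simp_all add: sum.lessThan_Suc_shift del: sum.lessThan_Suc)

lemma sq_norm_step_state:
  "sq_norm (dim M) (step_state M \<psi> \<sigma>) = (\<Sum>q\<in>live_states M. (cmod (step_state M \<psi> \<sigma> q))\<^sup>2)"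
  unfolding sq_norm_def
  by (rule sum.mono_neutral_right) (auto simp: live_states_def step_state_def)

lemma step_conservation:
  assumes "wf_mmqfa M"
  shows "step_acc M \<psi> \<sigma> + step_rej M \<psi> \<sigma> + sq_norm (dim M) (step_state M \<psi> \<sigma>) = sq_norm (dim M) \<psi>"
proof -
  let ?p = "\<lambda>i. (cmod (evolve M \<psi> \<sigma> i))\<^sup>2"
  have Q: "Qacc M \<subseteq> {..<dim M}" "Qrej M \<subseteq> {..<dim M}" "Qacc M \<inter> Qrej M = {}"
    using assms by (auto simp: wf_mmqfa_def)
  have fin: "finite (Qacc M)" "finite (Qrej M)"
    using Q by (auto intro: finite_subset)
  have "{..<dim M} = halting M \<union> live_states M"
    using Q by (auto simp: halting_def live_states_def)
  then have "sum ?p {..<dim M} = sum ?p (halting M \<union> live_states M)"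
    by simp
  also have "\<dots> = sum ?p (halting M) + sum ?p (live_states M)"
    using fin by (intro sum.union_disjoint) (auto simp: halting_def live_states_def)
  also have "sum ?p (halting M) = sum ?p (Qacc M) + sum ?p (Qrej M)"
    unfolding halting_def using fin Q(3) by (rule sum.union_disjoint)
  also have "sum ?p (live_states M) = sq_norm (dim M) (step_state M \<psi> \<sigma>)"
    unfolding sq_norm_step_state by (intro sum.cong) (auto simp: live_states_def step_state_def)
  also have "sum ?p {..<dim M} = sq_norm (dim M) \<psi>"
    using assms by (simp add: wf_mmqfa_def evolve_def sq_norm_mat_vec flip: sq_norm_def)
  finally show ?thesis by (simp add: step_acc_def step_rej_def)
qed

lemma run_conservation:
  assumes "wf_mmqfa M"
  shows "run_acc M \<psi> xs + run_rej M \<psi> xs + sq_norm (dim M) (run_state M \<psi> xs) = sq_norm (dim M) \<psi>"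
  by (induction xs arbitrary: \<psi>)
    (simp_all, metis step_conservation[OF assms] add.assoc add.left_commute)

lemma run_state_simulation:
  assumes "R \<psi>' \<phi>"
    and "\<And>\<psi>' \<phi> \<sigma>. R \<psi>' \<phi> \<Longrightarrow> \<sigma> \<in> set xs \<Longrightarrow> R (step_state M' \<psi>' \<sigma>) (run_state M \<phi> (f \<sigma>))"
  shows "R (run_state M' \<psi>' xs) (run_state M \<phi> (concat (map f xs)))"
  using assms by (induction xs arbitrary: \<psi>' \<phi>) (auto simp: run_state_append)

lemma run_acc_simulation:
  assumes "R \<psi>' \<phi>"
    and "\<And>\<psi>' \<phi> \<sigma>. R \<psi>' \<phi> \<Longrightarrow> \<sigma> \<in> set xs \<Longrightarrow> R (step_state M' \<psi>' \<sigma>) (run_state M \<phi> (f \<sigma>))"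
    and "\<And>\<psi>' \<phi> \<sigma>. R \<psi>' \<phi> \<Longrightarrow> \<sigma> \<in> set xs \<Longrightarrow> step_acc M' \<psi>' \<sigma> = run_acc M \<phi> (f \<sigma>)"
  shows "run_acc M' \<psi>' xs = run_acc M \<phi> (concat (map f xs))"
  using assms by (induction xs arbitrary: \<psi>' \<phi>) (auto simp: run_acc_append)

definition swap_acc_rej :: "'a mmqfa \<Rightarrow> 'a mmqfa" where
  "swap_acc_rej M = M\<lparr>Qacc := Qrej M, Qrej := Qacc M\<rparr>"

lemma swap_acc_rej_simps [simp]:
  "dim (swap_acc_rej M) = dim M" "umat (swap_acc_rej M) = umat M" "init (swap_acc_rej M) = init M"
  "Qacc (swap_acc_rej M) = Qrej M" "Qrej (swap_acc_rej M) = Qacc M"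
  by (simp_all add: swap_acc_rej_def)

lemma wf_swap_acc_rej: "wf_mmqfa M \<Longrightarrow> wf_mmqfa (swap_acc_rej M)"
  by (auto simp: wf_mmqfa_def)

lemma halting_swap_acc_rej [simp]: "halting (swap_acc_rej M) = halting M"
  by (auto simp: halting_def)

lemma step_state_swap_acc_rej [simp]: "step_state (swap_acc_rej M) = step_state M"
  by (simp add: step_state_def evolve_def fun_eq_iff)

lemma step_acc_swap_acc_rej [simp]: "step_acc (swap_acc_rej M) = step_rej M"
  by (simp add: step_acc_def step_rej_def evolve_def fun_eq_iff)

lemma run_state_swap_acc_rej [simp]: "run_state (swap_acc_rej M) \<psi> xs = run_state M \<psi> xs"
  by (induction xs arbitrary: \<psi>) simp_all

lemma run_acc_swap_acc_rej [simp]: "run_acc (swap_acc_rej M) \<psi> xs = run_rej M \<psi> xs"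
  by (induction xs arbitrary: \<psi>) simp_all

section \<open>Simulating a word by a single letter\<close>

definition block_image :: "nat \<Rightarrow> nat set \<Rightarrow> nat set \<Rightarrow> nat set" where
  "block_image n T S = (\<Union>t\<in>T. (\<lambda>q. n * t + q) ` S)"

lemma mem_block_image:
  assumes "S \<subseteq> {..<n}"
  shows "j \<in> block_image n T S \<longleftrightarrow> j div n \<in> T \<and> j mod n \<in> S"
proof
  assume "j \<in> block_image n T S"
  then obtain t q where "t \<in> T" "q \<in> S" "j = n * t + q"
    by (auto simp: block_image_def)
  moreover have "q < n" using assms \<open>q \<in> S\<close> by auto
  ultimately show "j div n \<in> T \<and> j mod n \<in> S" by simp
next
  assume "j div n \<in> T \<and> j mod n \<in> S"
  moreover have "j = n * (j div n) + j mod n" by simp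
  ultimately show "j \<in> block_image n T S"
    unfolding block_image_def by blast
qed

lemma block_index_eq_iff:
  fixes n t t' q q' :: nat
  assumes "q < n" "q' < n"
  shows "n * t + q = n * t' + q' \<longleftrightarrow> t = t' \<and> q = q'"
proof
  assume eq: "n * t + q = n * t' + q'"
  have "t = (n * t + q) div n" "t' = (n * t' + q') div n"
    using assms by simp_all
  then have "t = t'" using eq by simp
  then show "t = t' \<and> q = q'" using eq by simp
qed simp

lemma block_index_less:
  fixes n t T q :: nat
  assumes "t < T" "q < n"
  shows "n * t + q < n * T"
proof -
  from assms have "n * t + q < n * Suc t" by simp
  also have "\<dots> \<le> n * T" using \<open>t < T\<close> by (intro mult_le_mono2) simp
  finally show ?thesis .
qed

lemma block_index_ge:
  fixes n k k' q :: nat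
  shows "k' \<le> k \<Longrightarrow> n * k' \<le> n * k + q"
  using mult_le_mono2[of k' k n] by linarith

lemma block_index_cases:
  fixes n j L :: nat
  obtains "j < n" | "n * (1 + L) \<le> j" | k q where "k < L" "q < n" "j = n * (1 + k) + q"
proof (cases "j < n \<or> n * (1 + L) \<le> j")
  case False
  then have "n \<le> j" "j < n * (1 + L)" by auto
  then have "0 < n" by (cases n) auto
  with \<open>n \<le> j\<close> \<open>j < n * (1 + L)\<close> have "0 < j div n" "j div n < 1 + L"
    by (auto simp: div_greater_zero_iff less_mult_imp_div_less mult.commute)
  then obtain k where "j div n = 1 + k" "k < L"
    by (metis add_less_cancel_left less_imp_Suc_add plus_1_eq_Suc)
  then show ?thesis
    using that(3)[of k "j mod n"] \<open>0 < n\<close> by (metis mod_less_divisor mult_div_mod_eq)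
qed (use that in blast)+

lemma finite_block_image: "finite T \<Longrightarrow> finite S \<Longrightarrow> finite (block_image n T S)"
  by (simp add: block_image_def)

lemma block_image_Un: "block_image n T A \<union> block_image n T B = block_image n T (A \<union> B)"
  by (auto simp: block_image_def)

lemma sum_block_image:
  assumes "S \<subseteq> {..<n}" "finite T" "finite S"
  shows "sum h (block_image n T S) = (\<Sum>t\<in>T. \<Sum>q\<in>S. h (n * t + q))"
  unfolding block_image_def
proof (subst sum.UNION_disjoint)
  show "\<forall>t\<in>T. \<forall>t'\<in>T. t \<noteq> t' \<longrightarrow> (\<lambda>q. n * t + q) ` S \<inter> (\<lambda>q. n * t' + q) ` S = {}"
    using assms(1) block_index_eq_iff by blast
  show "(\<Sum>t\<in>T. sum h ((\<lambda>q. n * t + q) ` S)) = (\<Sum>t\<in>T. \<Sum>q\<in>S. h (n * t + q))"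
    by (simp add: sum.reindex)
qed (use assms in auto)

lemma block_image_bounds:
  assumes "S \<subseteq> {..<n}" "T \<subseteq> {1..<T'}" "j \<in> block_image n T S"
  shows "n \<le> j \<and> j < n * T'"
proof -
  obtain t q where tq: "t \<in> T" "q \<in> S" "j = n * t + q"
    using assms(3) by (auto simp: block_image_def)
  then have "1 \<le> t" "t < T'" "q < n" using assms(1,2) by auto
  then have "n \<le> n * t" "n * t + q < n * T'"
    by (simp_all add: block_index_less)
  then show ?thesis using tq(3) by linarith
qed

(* Sub-step t applies U_sigma to block 0 and then moves the amplitudes of its halting states into
   the empty block t, where they are left untouched until the measurement. *)
definition substep_mat :: "'a mmqfa \<Rightarrow> nat \<Rightarrow> nat \<Rightarrow> 'a option \<Rightarrow> cmat" where
  "substep_mat M N t \<sigma> =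
     mat_mul N (perm_mat (block_swap (dim M) (dim M * t) (halting M))) (mat_extend (dim M) (umat M \<sigma>))"

fun multistep_mat :: "'a mmqfa \<Rightarrow> nat \<Rightarrow> nat \<Rightarrow> 'a option list \<Rightarrow> cmat" where
  "multistep_mat M N t [] = id_mat"
| "multistep_mat M N t (\<sigma> # ws) = mat_mul N (multistep_mat M N (Suc t) ws) (substep_mat M N t \<sigma>)"

lemma unitary_multistep_mat:
  assumes "wf_mmqfa M" "1 \<le> t" "dim M * (t + length ws) \<le> N"
  shows "unitary_on N (multistep_mat M N t ws)"
  using assms(2,3)
proof (induction ws arbitrary: t)
  case (Cons \<sigma> ws)
  have "dim M \<le> dim M * t" "dim M * t + dim M \<le> N"
    using Cons.prems by (auto simp: algebra_simps)
  moreover have "unitary_on (dim M) (umat M \<sigma>)"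
    using assms(1) by (simp add: wf_mmqfa_def)
  ultimately have "unitary_on N (substep_mat M N t \<sigma>)"
    unfolding substep_mat_def
    by (intro unitary_mat_mul unitary_block_swap unitary_mat_extend) simp_all
  then show ?case
    using Cons by (simp add: unitary_mat_mul)
qed (simp add: unitary_id_mat)

lemma substep_mat_outside:
  assumes "1 \<le> t" "dim M * t + dim M \<le> N"
    and "j < N" "dim M \<le> j" "j < dim M * t \<or> dim M * t + dim M \<le> j"
  shows "mat_vec N (substep_mat M N t \<sigma>) y j = y j"
proof -
  have "block_swap (dim M) (dim M * t) (halting M) j = j"
    using assms(4,5) by (rule block_swap_other)
  moreover have "dim M \<le> dim M * t" using assms(1) by simp
  ultimately show ?thesis
    using assms by (simp add: substep_mat_def mat_vec_mat_mul mat_vec_perm_mat mat_vec_mat_extend)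
qed

lemma substep_mat_action:
  fixes M :: "'a mmqfa" and \<sigma> :: "'a option" and y \<phi> :: cvec and N t :: nat
  defines "n \<equiv> dim M"
  assumes t: "1 \<le> t" "n * t + n \<le> N"
    and y0: "\<And>i. i < n \<Longrightarrow> y i = \<phi> i"
    and yt: "\<And>q. q < n \<Longrightarrow> y (n * t + q) = 0"
  defines "z \<equiv> mat_vec N (substep_mat M N t \<sigma>) y"
  shows "i < n \<Longrightarrow> z i = step_state M \<phi> \<sigma> i"
    and "q < n \<Longrightarrow> z (n * t + q) = step_halted M \<phi> \<sigma> q"
proof -
  let ?e = "mat_vec N (mat_extend n (umat M \<sigma>)) y"
  have nt: "n \<le> n * t" using t(1) by simp
  have e_low: "?e i = evolve M \<phi> \<sigma> i" if "i < n" for i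
    using that t y0 mat_vec_cong[of n y \<phi>] by (simp add: mat_vec_mat_extend evolve_def n_def)
  have e_block: "?e (n * t + q) = y (n * t + q)" if "q < n" for q
  proof -
    have "n \<le> n * t + q" "n * t + q < N" using nt t(2) that by linarith+
    then show ?thesis by (simp add: mat_vec_mat_extend)
  qed
  have z: "z j = ?e (block_swap n (n * t) (halting M) j)" if "j < N" for j
    using block_swap_involution[OF nt t(2) that]
    by (simp add: z_def substep_mat_def mat_vec_mat_mul mat_vec_perm_mat n_def)
  show "z i = step_state M \<phi> \<sigma> i" if "i < n"
  proof -
    have "z i = (if i \<in> halting M then y (n * t + i) else ?e i)"
      using z[of i] that nt t(2) e_block by (simp add: block_swap_low)
    then show ?thesis
      using that yt e_low by (simp add: step_state_def n_def)
  qed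
  show "z (n * t + q) = step_halted M \<phi> \<sigma> q" if "q < n"
  proof -
    have "z (n * t + q) = (if q \<in> halting M then ?e q else y (n * t + q))"
      using z[of "n * t + q"] that nt t(2) e_block by (simp add: block_swap_block)
    then show ?thesis
      using that yt e_low by (simp add: step_halted_def)
  qed
qed

definition multistep_input :: "'a mmqfa \<Rightarrow> nat \<Rightarrow> nat \<Rightarrow> cvec \<Rightarrow> cvec \<Rightarrow> bool" where
  "multistep_input M t L \<phi> y \<longleftrightarrow>
     (\<forall>i < dim M. y i = \<phi> i) \<and> (\<forall>k < L. \<forall>q < dim M. y (dim M * (t + k) + q) = 0)"

lemma multistep_input_substep:
  assumes t: "1 \<le> t" "dim M * (t + Suc L) \<le> N" and y: "multistep_input M t (Suc L) \<phi> y"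
  shows "multistep_input M (Suc t) L (step_state M \<phi> \<sigma>) (mat_vec N (substep_mat M N t \<sigma>) y)"
proof -
  let ?n = "dim M"
  have bound: "?n * t + ?n \<le> N" using t(2) by (simp add: algebra_simps)
  have yt: "y (?n * t + q) = 0" if "q < ?n" for q
    using y that by (auto simp: multistep_input_def dest: spec[of _ 0])
  note substep = substep_mat_action[where M = M and \<sigma> = \<sigma> and y = y and \<phi> = \<phi>, OF t(1) bound _ yt]
    substep_mat_outside[OF t(1) bound]
  have "mat_vec N (substep_mat M N t \<sigma>) y (?n * (Suc t + k) + q) = 0" if "k < L" "q < ?n" for k q
  proof -
    have "?n * (Suc t + k) + q < ?n * (t + Suc L)"
      using that by (intro block_index_less) simp_all
    then have "mat_vec N (substep_mat M N t \<sigma>) y (?n * (Suc t + k) + q) = y (?n * (t + Suc k) + q)"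
      using t(2) by (subst substep(3)) (simp_all add: algebra_simps)
    also have "\<dots> = 0"
      using y that unfolding multistep_input_def by (metis Suc_mono)
    finally show ?thesis .
  qed
  then show ?thesis
    using y substep(1) by (simp add: multistep_input_def)
qed

lemma multistep_mat_outside:
  assumes "1 \<le> t" "dim M * (t + length ws) \<le> N"
    and "j < N" "dim M \<le> j" "j < dim M * t \<or> dim M * (t + length ws) \<le> j"
  shows "mat_vec N (multistep_mat M N t ws) y j = y j"
  using assms
proof (induction ws arbitrary: t y)
  case (Cons \<sigma> ws)
  have "mat_vec N (multistep_mat M N (Suc t) ws) (mat_vec N (substep_mat M N t \<sigma>) y) j
      = mat_vec N (substep_mat M N t \<sigma>) y j"
    using Cons.prems by (intro Cons.IH) (auto simp: algebra_simps)
  also have "\<dots> = y j"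
    using Cons.prems by (intro substep_mat_outside) (auto simp: algebra_simps)
  finally show ?case by (simp add: mat_vec_mat_mul)
qed (simp add: mat_vec_id_mat)

lemma multistep_mat_state:
  assumes "1 \<le> t" "dim M * (t + length ws) \<le> N" "multistep_input M t (length ws) \<phi> y" "i < dim M"
  shows "mat_vec N (multistep_mat M N t ws) y i = run_state M \<phi> ws i"
  using assms
proof (induction ws arbitrary: t y \<phi>)
  case Nil
  have "dim M \<le> dim M * t" "dim M * t \<le> N" using Nil.prems(1,2) by simp_all
  then have "dim M \<le> N" by linarith
  then show ?case using Nil.prems(3,4) by (simp add: mat_vec_id_mat multistep_input_def)
next
  case (Cons \<sigma> ws)
  then show ?case
    using multistep_input_substep[of t M "length ws" N \<phi> y \<sigma>] by (simp add: mat_vec_mat_mul)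
qed

lemma multistep_mat_halted:
  assumes "1 \<le> t" "dim M * (t + length ws) \<le> N" "multistep_input M t (length ws) \<phi> y"
    and "k < length ws" "q < dim M"
  shows "mat_vec N (multistep_mat M N t ws) y (dim M * (t + k) + q)
    = step_halted M (run_state M \<phi> (take k ws)) (ws ! k) q"
  using assms
proof (induction ws arbitrary: t y \<phi> k)
  case (Cons \<sigma> ws)
  let ?n = "dim M" and ?y1 = "mat_vec N (substep_mat M N t \<sigma>) y"
  have input: "multistep_input M (Suc t) (length ws) (step_state M \<phi> \<sigma>) ?y1"
    using Cons.prems by (intro multistep_input_substep) simp_all
  show ?case
  proof (cases k)
    case 0
    have "?n \<le> ?n * t" using Cons.prems(1) by simp
    then have "?n \<le> ?n * t + q" by linarith
    then have "mat_vec N (multistep_mat M N (Suc t) ws) ?y1 (?n * t + q) = ?y1 (?n * t + q)"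
      using Cons.prems by (intro multistep_mat_outside) (simp_all add: algebra_simps)
    also have "\<dots> = step_halted M \<phi> \<sigma> q"
    proof (rule substep_mat_action(2))
      show "1 \<le> t" "?n * t + ?n \<le> N" "q < ?n"
        using Cons.prems by (simp_all add: algebra_simps)
      show "y i = \<phi> i" if "i < ?n" for i
        using Cons.prems(3) that by (simp add: multistep_input_def)
      show "y (?n * t + q') = 0" if "q' < ?n" for q'
        using Cons.prems(3) that by (auto simp: multistep_input_def dest: spec[of _ 0])
    qed
    finally show ?thesis using 0 by (simp add: mat_vec_mat_mul)
  next
    case (Suc k')
    then show ?thesis
      using Cons.IH[OF _ _ input, of k'] Cons.prems by (simp add: mat_vec_mat_mul)
  qed
qed simp

(* Block 0 holds the state of M and block t, for 1 <= t <= K, the amplitude halted in sub-step t.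
   If D sigma holds, the live amplitude of block 0 is finally moved to the accepting block K + 1.
   The unitaries never touch the last two states; the very last one may carry a constant amplitude
   c (see block_layout), used to pad a sub-normalised state to a unit vector. *)
definition block_sim ::
    "'a mmqfa \<Rightarrow> nat \<Rightarrow> ('b option \<Rightarrow> 'a option list) \<Rightarrow> ('b option \<Rightarrow> bool) \<Rightarrow> 'b mmqfa" where
  "block_sim M K f D =
     \<lparr>dim = dim M * (K + 2) + 2,
      umat = (\<lambda>\<sigma>. mat_mul (dim M * (K + 2) + 2)
               (if D \<sigma> then perm_mat (block_swap (dim M) (dim M * (K + 1)) (live_states M)) else id_mat)
               (multistep_mat M (dim M * (K + 2) + 2) 1 (f \<sigma>))),
      init = init M,
      Qacc = block_image (dim M) {1..K} (Qacc M) \<union> block_image (dim M) {K + 1} (live_states M),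
      Qrej = block_image (dim M) {1..K} (Qrej M)\<rparr>"

lemma block_sim_simps:
  "dim (block_sim M K f D) = dim M * (K + 2) + 2"
  "umat (block_sim M K f D) \<sigma> = mat_mul (dim M * (K + 2) + 2)
     (if D \<sigma> then perm_mat (block_swap (dim M) (dim M * (K + 1)) (live_states M)) else id_mat)
     (multistep_mat M (dim M * (K + 2) + 2) 1 (f \<sigma>))"
  "init (block_sim M K f D) = init M"
  "Qacc (block_sim M K f D) = block_image (dim M) {1..K} (Qacc M) \<union> block_image (dim M) {K + 1} (live_states M)"
  "Qrej (block_sim M K f D) = block_image (dim M) {1..K} (Qrej M)"
  by (simp_all add: block_sim_def)

lemma halting_block_sim:
  "halting (block_sim M K f D) = block_image (dim M) {1..K} (halting M) \<union> block_image (dim M) {K + 1} (live_states M)"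
  by (auto simp: halting_def block_sim_simps simp flip: block_image_Un)

lemma halting_block_sim_bounds:
  assumes "wf_mmqfa M" "j \<in> halting (block_sim M K f D)"
  shows "dim M \<le> j \<and> j < dim M * (K + 2)"
proof -
  have "halting M \<subseteq> {..<dim M}" "live_states M \<subseteq> {..<dim M}"
    using assms(1) by (auto simp: wf_mmqfa_def halting_def live_states_def)
  moreover have "{1..K} \<subseteq> {1..<K + 2}" "{K + 1} \<subseteq> {1..<K + 2}" by auto
  ultimately show ?thesis
    using assms(2) block_image_bounds unfolding halting_block_sim by blast
qed

lemma halting_block_sim_block:
  assumes "wf_mmqfa M" "1 \<le> t" "t \<le> K" "q \<in> halting M"
  shows "dim M * t + q \<in> halting (block_sim M K f D)"
proof -
  have H: "halting M \<subseteq> {..<dim M}"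
    using assms(1) by (auto simp: wf_mmqfa_def halting_def)
  then have "q < dim M" using assms(4) by auto
  then show ?thesis
    using assms(2-4) by (simp add: halting_block_sim mem_block_image[OF H])
qed

lemma wf_block_sim:
  assumes wf: "wf_mmqfa M" and len: "\<And>\<sigma>. length (f \<sigma>) \<le> K"
  shows "wf_mmqfa (block_sim M K f D)"
proof -
  let ?n = "dim M" and ?N = "dim M * (K + 2) + 2"
  have Q: "Qacc M \<subseteq> {..<?n}" "Qrej M \<subseteq> {..<?n}" "Qacc M \<inter> Qrej M = {}" "live_states M \<subseteq> {..<?n}"
    using wf by (auto simp: wf_mmqfa_def live_states_def)
  have "unitary_on ?N (umat (block_sim M K f D) \<sigma>)" for \<sigma>
  proof -
    have "?n * (1 + length (f \<sigma>)) \<le> ?N"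
      using mult_le_mono2[of "1 + length (f \<sigma>)" "K + 2" ?n] len[of \<sigma>] by simp
    then have "unitary_on ?N (multistep_mat M ?N 1 (f \<sigma>))"
      by (intro unitary_multistep_mat wf) simp_all
    moreover have "unitary_on ?N (perm_mat (block_swap ?n (?n * (K + 1)) (live_states M)))"
      by (rule unitary_block_swap) (simp_all add: algebra_simps)
    ultimately show ?thesis
      by (simp add: block_sim_simps unitary_mat_mul unitary_id_mat)
  qed
  moreover have "halting (block_sim M K f D) \<subseteq> {..<?N}"
    using halting_block_sim_bounds[OF wf] by fastforce
  moreover have "Qacc (block_sim M K f D) \<inter> Qrej (block_sim M K f D) = {}"
    using Q by (auto simp: block_sim_simps mem_block_image)
  ultimately show ?thesis
    using wf by (auto simp: wf_mmqfa_def halting_def block_sim_simps)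
qed

definition block_layout :: "nat \<Rightarrow> nat \<Rightarrow> complex \<Rightarrow> cvec \<Rightarrow> cvec \<Rightarrow> bool" where
  "block_layout n K c \<phi> \<psi> \<longleftrightarrow>
     (\<forall>j < n * (K + 2) + 2. \<psi> j = (if j < n then \<phi> j else if j = n * (K + 2) + 1 then c else 0))"

lemma block_layout_id_mat: "k < n \<Longrightarrow> block_layout n K 0 (id_mat k) (id_mat k)"
  by (auto simp: block_layout_def id_mat_def)

lemma multistep_mat_block_layout:
  fixes M :: "'a mmqfa" and ws :: "'a option list" and \<psi> \<phi> :: cvec and K :: nat and c :: complex
  defines "n \<equiv> dim M"
  defines "z \<equiv> mat_vec (n * (K + 2) + 2) (multistep_mat M (n * (K + 2) + 2) 1 ws) \<psi>"
  assumes len: "length ws \<le> K" and layout: "block_layout n K c \<phi> \<psi>"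
  shows "i < n \<Longrightarrow> z i = run_state M \<phi> ws i"
    and "k < length ws \<Longrightarrow> q < n \<Longrightarrow>
      z (n * (1 + k) + q) = step_halted M (run_state M \<phi> (take k ws)) (ws ! k) q"
    and "j < n * (K + 2) + 2 \<Longrightarrow> n * (1 + length ws) \<le> j \<Longrightarrow>
      z j = (if j = n * (K + 2) + 1 then c else 0)"
proof -
  let ?N = "n * (K + 2) + 2"
  have bound: "n * (1 + length ws) \<le> ?N"
    using mult_le_mono2[of "1 + length ws" "K + 2" n] len by simp
  have "multistep_input M 1 (length ws) \<phi> \<psi>"
    unfolding multistep_input_def n_def[symmetric]
  proof (intro conjI allI impI)
    show "\<psi> i = \<phi> i" if "i < n" for i
      using layout that by (simp add: block_layout_def)
    show "\<psi> (n * (1 + k) + q) = 0" if "k < length ws" "q < n" for k q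
    proof -
      have "n * (1 + k) + q < n * (K + 2)"
        using that len by (intro block_index_less) simp_all
      then show ?thesis
        using layout that by (simp add: block_layout_def)
    qed
  qed
  note input = bound[unfolded n_def] this
  show "z i = run_state M \<phi> ws i" if "i < n"
    unfolding z_def n_def using multistep_mat_state[OF _ input] that by (simp add: n_def)
  show "z (n * (1 + k) + q) = step_halted M (run_state M \<phi> (take k ws)) (ws ! k) q"
    if "k < length ws" "q < n"
    unfolding z_def n_def using multistep_mat_halted[OF _ input] that by (simp add: n_def)
  show "z j = (if j = n * (K + 2) + 1 then c else 0)" if "j < ?N" "n * (1 + length ws) \<le> j"
  proof -
    have "n \<le> j" using that(2) block_index_ge[of 1 "1 + length ws" n 0] by simp
    then have "z j = \<psi> j"
      unfolding z_def n_def using multistep_mat_outside[OF _ input(1)] that by (simp add: n_def)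
    then show ?thesis using layout that \<open>n \<le> j\<close> by (simp add: block_layout_def)
  qed
qed

lemma multistep_mat_block_layout_acc:
  fixes M :: "'a mmqfa" and ws :: "'a option list" and \<psi> \<phi> :: cvec and K :: nat and c :: complex
  defines "n \<equiv> dim M"
  defines "z \<equiv> mat_vec (n * (K + 2) + 2) (multistep_mat M (n * (K + 2) + 2) 1 ws) \<psi>"
  assumes wf: "wf_mmqfa M" and len: "length ws \<le> K" and layout: "block_layout n K c \<phi> \<psi>"
  shows "(\<Sum>k<K. \<Sum>q\<in>Qacc M. (cmod (z (n * (1 + k) + q)))\<^sup>2) = run_acc M \<phi> ws"
proof -
  note z = multistep_mat_block_layout[OF len layout[unfolded n_def], folded z_def[unfolded n_def], folded n_def]
  have Q: "Qacc M \<subseteq> {..<n}"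
    using wf by (auto simp: wf_mmqfa_def n_def)
  have "(\<Sum>k<K. \<Sum>q\<in>Qacc M. (cmod (z (n * (1 + k) + q)))\<^sup>2)
      = (\<Sum>k<K. if k < length ws then step_acc M (run_state M \<phi> (take k ws)) (ws ! k) else 0)"
  proof (intro sum.cong refl)
    fix k assume "k \<in> {..<K}"
    show "(\<Sum>q\<in>Qacc M. (cmod (z (n * (1 + k) + q)))\<^sup>2)
        = (if k < length ws then step_acc M (run_state M \<phi> (take k ws)) (ws ! k) else 0)"
    proof (cases "k < length ws")
      case True
      have "(\<Sum>q\<in>Qacc M. (cmod (z (n * (1 + k) + q)))\<^sup>2)
          = (\<Sum>q\<in>Qacc M. (cmod (step_halted M (run_state M \<phi> (take k ws)) (ws ! k) q))\<^sup>2)"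
        by (intro sum.cong refl arg_cong[where f = "\<lambda>x. (cmod x)\<^sup>2"] z(2)) (use True Q in auto)
      then show ?thesis using True by (simp add: step_acc_step_halted)
    next
      case False
      have "z (n * (1 + k) + q) = 0" if "q \<in> Qacc M" for q
      proof -
        have "n * (1 + k) + q < n * (K + 2)"
          using \<open>k \<in> {..<K}\<close> that Q by (intro block_index_less) auto
        moreover have "n * (1 + length ws) \<le> n * (1 + k) + q"
          using False by (intro block_index_ge) simp
        ultimately show ?thesis
          using z(3)[of "n * (1 + k) + q"] by simp
      qed
      then show ?thesis using False by simp
    qed
  qed
  also have "\<dots> = run_acc M \<phi> ws"
    using len by (simp add: sum_lessThan_if_less run_acc_eq_sum)
  finally show ?thesis .
qed

lemma evolve_block_sim:
  fixes M :: "'a mmqfa" and f :: "'b option \<Rightarrow> 'a option list" and \<sigma> :: "'b option"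
    and \<psi> \<phi> :: cvec and K :: nat and c :: complex
  defines "n \<equiv> dim M"
  defines "z \<equiv> mat_vec (n * (K + 2) + 2) (multistep_mat M (n * (K + 2) + 2) 1 (f \<sigma>)) \<psi>"
  assumes len: "length (f \<sigma>) \<le> K" and layout: "block_layout n K c \<phi> \<psi>"
  shows "n \<le> j \<Longrightarrow> j < n * (K + 1) \<Longrightarrow> evolve (block_sim M K f D) \<psi> \<sigma> j = z j"
    and "q < n \<Longrightarrow> evolve (block_sim M K f D) \<psi> \<sigma> (n * (K + 1) + q)
           = (if D \<sigma> \<and> q \<in> live_states M then run_state M \<phi> (f \<sigma>) q else 0)"
    and "\<not> D \<sigma> \<Longrightarrow> j < n * (K + 2) + 2 \<Longrightarrow> evolve (block_sim M K f D) \<psi> \<sigma> j = z j"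
proof -
  let ?N = "n * (K + 2) + 2" and ?swap = "block_swap n (n * (K + 1)) (live_states M)"
  have evolve: "evolve (block_sim M K f D) \<psi> \<sigma> j = (if D \<sigma> then z (?swap j) else z j)" if "j < ?N" for j
  proof -
    have "?swap j < ?N"
      using that by (intro conjunct1[OF block_swap_involution]) (simp_all add: algebra_simps)
    then show ?thesis
      using that by (simp add: evolve_def block_sim_simps mat_vec_mat_mul mat_vec_perm_mat
          mat_vec_id_mat z_def n_def)
  qed
  note z = multistep_mat_block_layout[OF len layout[unfolded n_def], folded z_def[unfolded n_def], folded n_def]
  show "evolve (block_sim M K f D) \<psi> \<sigma> j = z j" if "n \<le> j" "j < n * (K + 1)"
    using that evolve[of j] by (simp add: block_swap_other)
  show "evolve (block_sim M K f D) \<psi> \<sigma> (n * (K + 1) + q)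
      = (if D \<sigma> \<and> q \<in> live_states M then run_state M \<phi> (f \<sigma>) q else 0)" if "q < n"
  proof -
    have "n * (K + 1) + q < n * (K + 2)"
      using that by (intro block_index_less) simp_all
    moreover have "n * (1 + length (f \<sigma>)) \<le> n * (K + 1) + q"
      using len by (intro block_index_ge) simp
    ultimately have "z (n * (K + 1) + q) = 0"
      using z(3)[of "n * (K + 1) + q"] by simp
    then show ?thesis
      using that evolve[of "n * (K + 1) + q"] z(1) by (simp add: block_swap_block)
  qed
  show "evolve (block_sim M K f D) \<psi> \<sigma> j = z j" if "\<not> D \<sigma>" "j < ?N"
    using that evolve by simp
qed

lemma step_acc_block_sim:
  fixes M :: "'a mmqfa" and f :: "'b option \<Rightarrow> 'a option list"
  assumes wf: "wf_mmqfa M" and len: "length (f \<sigma>) \<le> K" and layout: "block_layout (dim M) K c \<phi> \<psi>"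
  shows "step_acc (block_sim M K f D) \<psi> \<sigma> = run_acc M \<phi> (f \<sigma>)
           + (if D \<sigma> then (\<Sum>q\<in>live_states M. (cmod (run_state M \<phi> (f \<sigma>) q))\<^sup>2) else 0)"
proof -
  define n where "n = dim M"
  define ws where "ws = f \<sigma>"
  define z where "z = mat_vec (n * (K + 2) + 2) (multistep_mat M (n * (K + 2) + 2) 1 ws) \<psi>"
  let ?p = "\<lambda>j. (cmod (evolve (block_sim M K f D) \<psi> \<sigma> j))\<^sup>2"
  note e = evolve_block_sim[where f = f and \<sigma> = \<sigma> and D = D, OF len layout,
      folded z_def[unfolded n_def ws_def], folded n_def ws_def]
  have Q: "Qacc M \<subseteq> {..<n}" "live_states M \<subseteq> {..<n}"
    using wf by (auto simp: wf_mmqfa_def live_states_def n_def)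
  then have fin: "finite (Qacc M)" "finite (live_states M)"
    by (auto intro: finite_subset)
  have "step_acc (block_sim M K f D) \<psi> \<sigma>
      = sum ?p (block_image n {1..K} (Qacc M)) + sum ?p (block_image n {K + 1} (live_states M))"
    unfolding step_acc_def block_sim_simps n_def[symmetric]
    using Q fin by (intro sum.union_disjoint) (auto simp: finite_block_image mem_block_image)
  also have "sum ?p (block_image n {1..K} (Qacc M)) = run_acc M \<phi> ws"
  proof -
    have "?p (n * (1 + k) + q) = (cmod (z (n * (1 + k) + q)))\<^sup>2" if "k < K" "q \<in> Qacc M" for k q
    proof -
      have "n * (1 + k) + q < n * (K + 1)"
        using that Q(1) by (intro block_index_less) auto
      moreover have "n \<le> n * (1 + k) + q" by simp
      ultimately show ?thesis by (simp add: e(1))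
    qed
    then have "sum ?p (block_image n {1..K} (Qacc M)) = (\<Sum>k<K. \<Sum>q\<in>Qacc M. (cmod (z (n * (1 + k) + q)))\<^sup>2)"
      using Q(1) fin(1) by (simp add: sum_block_image sum.atLeast1_atMost_eq)
    also have "\<dots> = run_acc M \<phi> ws"
      unfolding z_def n_def ws_def using multistep_mat_block_layout_acc[OF wf len layout] by simp
    finally show ?thesis .
  qed
  also have "sum ?p (block_image n {K + 1} (live_states M))
      = (if D \<sigma> then (\<Sum>q\<in>live_states M. (cmod (run_state M \<phi> ws q))\<^sup>2) else 0)"
  proof -
    have "?p (n * (K + 1) + q) = (if D \<sigma> then (cmod (run_state M \<phi> ws q))\<^sup>2 else 0)"
      if "q \<in> live_states M" for q
      using that Q(2) by (subst e(2)) auto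
    then show ?thesis
      using Q(2) fin(2) by (simp add: sum_block_image)
  qed
  finally show ?thesis by (simp add: ws_def)
qed

lemma block_layout_step_block_sim:
  fixes M :: "'a mmqfa" and f :: "'b option \<Rightarrow> 'a option list"
  assumes wf: "wf_mmqfa M" and len: "length (f \<sigma>) \<le> K" and layout: "block_layout (dim M) K c \<phi> \<psi>"
    and "\<not> D \<sigma>"
  shows "block_layout (dim M) K c (run_state M \<phi> (f \<sigma>)) (step_state (block_sim M K f D) \<psi> \<sigma>)"
proof -
  define n where "n = dim M"
  define ws where "ws = f \<sigma>"
  define z where "z = mat_vec (n * (K + 2) + 2) (multistep_mat M (n * (K + 2) + 2) 1 ws) \<psi>"
  let ?H = "halting (block_sim M K f D)"
  note z = multistep_mat_block_layout[OF len layout, folded z_def[unfolded n_def ws_def], folded n_def ws_def]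
  note e = evolve_block_sim[where f = f and \<sigma> = \<sigma> and D = D, OF len layout,
      folded z_def[unfolded n_def ws_def], folded n_def ws_def]
  note H_bounds = halting_block_sim_bounds[OF wf, where K = K and f = f and D = D, folded n_def]
  have "step_state (block_sim M K f D) \<psi> \<sigma> j
      = (if j < n then run_state M \<phi> ws j else if j = n * (K + 2) + 1 then c else 0)"
    if j: "j < n * (K + 2) + 2" for j
  proof -
    have step: "step_state (block_sim M K f D) \<psi> \<sigma> j = (if j \<in> ?H then 0 else z j)"
      using j e(3)[OF \<open>\<not> D \<sigma>\<close> j] by (simp add: step_state_def block_sim_simps n_def)
    consider (low) "j < n" | (high) "n * (1 + length ws) \<le> j"
      | (block) k q where "k < length ws" "q < n" "j = n * (1 + k) + q"
      by (rule block_index_cases)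
    then show ?thesis
    proof cases
      case low
      then show ?thesis using step z(1) H_bounds[of j] by auto
    next
      case high
      have "j \<notin> ?H \<or> j \<noteq> n * (K + 2) + 1"
        using H_bounds by fastforce
      then show ?thesis
        using step z(3)[OF j high] high block_index_ge[of 1 "1 + length ws" n 0] by auto
    next
      case block
      have "q \<in> halting M \<Longrightarrow> j \<in> ?H"
        using halting_block_sim_block[OF wf, of "1 + k" K q f D] block len by (simp add: n_def ws_def)
      moreover have "j \<noteq> n * (K + 2) + 1" "\<not> j < n"
        using H_bounds block block_index_less[of "1 + k" "K + 2" q n] len by (auto simp: ws_def)
      ultimately show ?thesis
        using step z(2)[OF block(1,2)] block(3) by (auto simp: step_halted_def)
    qed
  qed
  then show ?thesis by (simp add: block_layout_def n_def ws_def)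
qed

lemma block_sim_simulation:
  fixes M :: "'a mmqfa" and f :: "'b option \<Rightarrow> 'a option list"
  assumes wf: "wf_mmqfa M" and len: "\<And>\<sigma>. length (f \<sigma>) \<le> K" and "\<forall>\<sigma>\<in>set xs. \<not> D \<sigma>"
    and layout: "block_layout (dim M) K c \<phi> \<psi>"
  shows "run_acc (block_sim M K f D) \<psi> xs = run_acc M \<phi> (concat (map f xs))"
    and "block_layout (dim M) K c (run_state M \<phi> (concat (map f xs))) (run_state (block_sim M K f D) \<psi> xs)"
proof -
  let ?R = "\<lambda>\<psi> \<phi>. block_layout (dim M) K c \<phi> \<psi>"
  have step: "?R (step_state (block_sim M K f D) \<psi>' \<sigma>) (run_state M \<phi>' (f \<sigma>))"
    if "?R \<psi>' \<phi>'" "\<sigma> \<in> set xs" for \<psi>' \<phi>' \<sigma>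
    using that assms by (intro block_layout_step_block_sim) auto
  show "run_acc (block_sim M K f D) \<psi> xs = run_acc M \<phi> (concat (map f xs))"
    using layout step assms by (intro run_acc_simulation[where R = ?R]) (auto simp: step_acc_block_sim)
  show "?R (run_state (block_sim M K f D) \<psi> xs) (run_state M \<phi> (concat (map f xs)))"
    using layout step by (rule run_state_simulation)
qed

lemma acc_prob_block_sim:
  assumes "wf_mmqfa M" "\<And>\<sigma>. length (f \<sigma>) \<le> K"
  shows "acc_prob (block_sim M K f (\<lambda>_. False)) x
    = run_acc M (id_mat (init M)) (concat (map f (map Some x @ [None])))"
proof -
  have "block_layout (dim M) K 0 (id_mat (init M)) (id_mat (init M))"
    using assms(1) by (intro block_layout_id_mat) (simp add: wf_mmqfa_def)
  then show ?thesis
    using assms by (simp add: acc_prob_run_acc block_sim_simps block_sim_simulation(1))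
qed

lemma acc_prob_complement:
  assumes wf: "wf_mmqfa M"
  shows "acc_prob (block_sim (swap_acc_rej M) 1 (\<lambda>\<sigma>. [\<sigma>]) (\<lambda>\<sigma>. \<sigma> = None)) x = 1 - acc_prob M x"
proof -
  define M' where "M' = block_sim (swap_acc_rej M) 1 (\<lambda>\<sigma>. [\<sigma>]) (\<lambda>\<sigma>. \<sigma> = None)"
  define e where "e = id_mat (init M)"
  define xs where "xs = map Some x"
  have wf': "wf_mmqfa (swap_acc_rej M)" using wf by (rule wf_swap_acc_rej)
  have "init M < dim M" using wf by (simp add: wf_mmqfa_def)
  then have layout: "block_layout (dim (swap_acc_rej M)) 1 0 e e"
    by (simp add: block_layout_id_mat e_def)
  have letters: "\<forall>\<sigma>\<in>set xs. \<sigma> \<noteq> None" by (simp add: xs_def)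
  have sim: "run_acc M' e xs = run_rej M e xs"
    "block_layout (dim M) 1 0 (run_state M e xs) (run_state M' e xs)"
    using block_sim_simulation[OF wf', where f = "\<lambda>\<sigma>. [\<sigma>]" and K = 1 and D = "\<lambda>\<sigma>. \<sigma> = None"
        and xs = xs, OF _ letters layout]
    by (simp_all add: M'_def)
  have live: "live_states (swap_acc_rej M) = live_states M"
    by (simp add: live_states_def)
  have "acc_prob M' x = run_acc M' e xs + step_acc M' (run_state M' e xs) None"
    by (simp add: acc_prob_run_acc run_acc_append M'_def block_sim_simps e_def xs_def)
  also have "\<dots> = run_rej M e xs + run_rej M (run_state M e xs) [None]
      + sq_norm (dim M) (run_state M e (xs @ [None]))"
    using sim unfolding M'_def
    by (simp add: step_acc_block_sim[OF wf'] sq_norm_step_state run_state_append live xs_def)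
  also have "\<dots> = 1 - acc_prob M x"
    using run_conservation[OF wf, of e "xs @ [None]"] sq_norm_id_mat[OF \<open>init M < dim M\<close>]
    by (simp add: acc_prob_run_acc run_rej_append e_def xs_def)
  finally show ?thesis by (simp add: M'_def)
qed

section \<open>Prescribing the initial state\<close>

definition householder_conj :: "'a mmqfa \<Rightarrow> cvec \<Rightarrow> nat \<Rightarrow> 'a mmqfa" where
  "householder_conj M v s =
     M\<lparr>umat := (\<lambda>\<sigma>. mat_mul (dim M) (householder v) (mat_mul (dim M) (umat M \<sigma>) (householder v))),
       init := s\<rparr>"

lemma householder_conj_simps [simp]:
  "dim (householder_conj M v s) = dim M" "init (householder_conj M v s) = s"
  "Qacc (householder_conj M v s) = Qacc M" "Qrej (householder_conj M v s) = Qrej M"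
  "umat (householder_conj M v s) \<sigma> = mat_mul (dim M) (householder v) (mat_mul (dim M) (umat M \<sigma>) (householder v))"
  by (simp_all add: householder_conj_def)

lemma halting_householder_conj [simp]: "halting (householder_conj M v s) = halting M"
  by (simp add: halting_def)

lemma wf_householder_conj:
  "wf_mmqfa M \<Longrightarrow> s < dim M \<Longrightarrow> cinner (dim M) v v = 2 \<Longrightarrow> wf_mmqfa (householder_conj M v s)"
  by (simp add: wf_mmqfa_def unitary_mat_mul unitary_householder)

lemma householder_conj_step:
  fixes M :: "'a mmqfa"
  defines "N \<equiv> dim M"
  assumes wf: "wf_mmqfa M" and v: "cinner N v v = 2" "\<And>j. j \<in> halting M \<Longrightarrow> v j = 0"
    and rel: "\<And>i. i < N \<Longrightarrow> mat_vec N (householder v) \<chi> i = \<phi> i"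
  shows "step_acc (householder_conj M v s) \<chi> \<sigma> = step_acc M \<phi> \<sigma>"
    and "i < N \<Longrightarrow> mat_vec N (householder v) (step_state (householder_conj M v s) \<chi> \<sigma>) i
           = step_state M \<phi> \<sigma> i"
proof -
  let ?y = "evolve M \<phi> \<sigma>"
  let ?a = "cinner N v ?y"
  have evolve: "evolve (householder_conj M v s) \<chi> \<sigma> i = ?y i - v i * ?a" if "i < N" for i
  proof -
    have "mat_vec N (umat M \<sigma>) (mat_vec N (householder v) \<chi>) = ?y"
      unfolding evolve_def N_def[symmetric] by (rule mat_vec_cong) (rule rel)
    then show ?thesis
      using that by (simp add: evolve_def mat_vec_mat_mul mat_vec_householder N_def)
  qed
  have HN: "halting M \<subseteq> {..<N}"
    using wf by (auto simp: wf_mmqfa_def halting_def N_def)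
  show "step_acc (householder_conj M v s) \<chi> \<sigma> = step_acc M \<phi> \<sigma>"
    unfolding step_acc_def using HN v(2) by (intro sum.cong) (auto simp: evolve halting_def)
  let ?m = "step_state (householder_conj M v s) \<chi> \<sigma>"
  have m: "?m i = step_state M \<phi> \<sigma> i - v i * ?a" if "i < N" for i
    using that v(2) by (auto simp: step_state_def evolve N_def)
  have live: "cinner N v (step_state M \<phi> \<sigma>) = ?a"
    unfolding cinner_def using v(2) by (intro sum.cong) (auto simp: step_state_def N_def)
  have "cinner N v ?m = (\<Sum>j<N. cnj (v j) * step_state M \<phi> \<sigma> j - cnj (v j) * v j * ?a)"
    unfolding cinner_def[of N v ?m] by (rule sum.cong) (simp_all add: m algebra_simps)
  also have "\<dots> = cinner N v (step_state M \<phi> \<sigma>) - cinner N v v * ?a"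
    by (simp add: cinner_def sum_subtractf sum_distrib_right)
  finally have "cinner N v ?m = - ?a"
    using live v(1) by simp
  then show "mat_vec N (householder v) ?m i = step_state M \<phi> \<sigma> i" if "i < N"
    using that by (simp add: mat_vec_householder m)
qed

lemma run_acc_householder_conj:
  assumes "wf_mmqfa M" "cinner (dim M) v v = 2" "\<And>j. j \<in> halting M \<Longrightarrow> v j = 0"
    and "\<And>i. i < dim M \<Longrightarrow> mat_vec (dim M) (householder v) \<chi> i = \<phi> i"
  shows "run_acc (householder_conj M v s) \<chi> xs = run_acc M \<phi> xs"
proof -
  let ?R = "\<lambda>\<chi> \<phi>. \<forall>i < dim M. mat_vec (dim M) (householder v) \<chi> i = \<phi> i"
  have "run_acc (householder_conj M v s) \<chi> xs = run_acc M \<phi> (concat (map (\<lambda>\<sigma>. [\<sigma>]) xs))"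
    by (rule run_acc_simulation[where R = ?R])
      (use assms householder_conj_step[OF assms(1-3)] in auto)
  then show ?thesis by simp
qed

lemma ex_mmqfa_initial_state:
  fixes M :: "'a mmqfa"
  assumes wf: "wf_mmqfa M" and norm: "sq_norm (dim M) \<psi> \<le> 1"
  shows "\<exists>M' :: 'a mmqfa. wf_mmqfa M' \<and> (\<forall>x. acc_prob M' x = run_acc M \<psi> (map Some x @ [None]))"
proof -
  define n where "n = dim M"
  define M1 where "M1 = block_sim M 1 (\<lambda>\<sigma>. [\<sigma>]) (\<lambda>_. False)"
  define s where "s = n * 3"
  define \<beta> where "\<beta> = sqrt (1 - sq_norm n \<psi>)"
  define u where "u j = (if j < n then \<psi> j else if j = s + 1 then complex_of_real \<beta> else 0)" for j
  let ?v = "\<lambda>j. id_mat s j - u j"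
  have dim1: "dim M1 = s + 2" by (simp add: M1_def block_sim_simps s_def n_def)
  have wf1: "wf_mmqfa M1" unfolding M1_def by (rule wf_block_sim[OF wf]) simp
  have layout: "block_layout (dim M) 1 (complex_of_real \<beta>) \<psi> u"
    by (simp add: block_layout_def u_def s_def n_def)
  have "sq_norm (s + 2) u = sq_norm n \<psi> + \<beta>\<^sup>2"
    unfolding u_def[abs_def] by (subst sq_norm_pad) (simp_all add: s_def)
  also have "\<dots> = 1"
    using norm by (simp add: \<beta>_def n_def)
  finally have "sq_norm (s + 2) u = 1" .
  moreover have "u s = 0" by (simp add: u_def s_def)
  ultimately have v2: "cinner (dim M1) ?v ?v = 2"
    and start: "\<And>i. i < dim M1 \<Longrightarrow> mat_vec (dim M1) (householder ?v) (id_mat s) i = u i"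
    unfolding dim1 by (simp_all add: householder_basis_swap)
  have v_halting: "?v j = 0" if "j \<in> halting M1" for j
    using halting_block_sim_bounds[OF wf that[unfolded M1_def]]
    by (simp add: u_def s_def n_def id_mat_def)
  define M' where "M' = householder_conj M1 ?v s"
  have "wf_mmqfa M'"
    unfolding M'_def using wf1 v2 by (intro wf_householder_conj) (simp_all add: dim1)
  moreover have "acc_prob M' x = run_acc M \<psi> (map Some x @ [None])" for x
  proof -
    have "acc_prob M' x = run_acc M1 u (map Some x @ [None])"
      unfolding M'_def acc_prob_run_acc using wf1 v2 v_halting start
      by (simp add: run_acc_householder_conj)
    also have "\<dots> = run_acc M \<psi> (map Some x @ [None])"
      unfolding M1_def
      using block_sim_simulation(1)[OF wf, where f = "\<lambda>\<sigma>. [\<sigma>]" and D = "\<lambda>_. False", OF _ _ layout]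
      by simp
    finally show ?thesis .
  qed
  ultimately show ?thesis by blast
qed

section \<open>Closure properties\<close>

lemma RMM_I: "wf_mmqfa M \<Longrightarrow> \<epsilon> \<le> \<epsilon>' \<Longrightarrow> accepts_with M L c \<epsilon>' \<Longrightarrow> L \<in> RMM \<epsilon>"
  unfolding RMM_def by blast

lemma RMM_E:
  assumes "L \<in> RMM \<epsilon>"
  obtains M :: "('a::finite) mmqfa" and c \<epsilon>' where "wf_mmqfa M" "\<epsilon> \<le> \<epsilon>'" "accepts_with M L c \<epsilon>'"
  using assms unfolding RMM_def by blast

lemma accepts_with_complement:
  assumes "accepts_with M L c \<epsilon>" "\<And>x. acc_prob M' x = 1 - acc_prob M x"
  shows "accepts_with M' (UNIV - L) (1 - c) \<epsilon>"
  using assms unfolding accepts_with_def by (smt (verit) Diff_iff UNIV_I)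

lemma accepts_with_shift:
  assumes "accepts_with M L c \<epsilon>" "\<And>x. acc_prob M' x = acc_prob M (g x) - a"
  shows "accepts_with M' {x. g x \<in> L} (c - a) \<epsilon>"
  using assms unfolding accepts_with_def by (smt (verit) mem_Collect_eq)

lemma RMM_complement:
  assumes "L \<in> RMM \<epsilon>"
  shows "UNIV - L \<in> RMM \<epsilon>"
proof -
  obtain M c \<epsilon>' where M: "wf_mmqfa M" "\<epsilon> \<le> \<epsilon>'" "accepts_with M L c \<epsilon>'"
    using assms by (rule RMM_E)
  let ?M' = "block_sim (swap_acc_rej M) 1 (\<lambda>\<sigma>. [\<sigma>]) (\<lambda>\<sigma>. \<sigma> = None)"
  have "wf_mmqfa ?M'"
    using M(1) by (intro wf_block_sim wf_swap_acc_rej) simp_all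
  moreover have "accepts_with ?M' (UNIV - L) (1 - c) \<epsilon>'"
    using M(3) acc_prob_complement[OF M(1)] by (rule accepts_with_complement)
  ultimately show ?thesis using M(2) RMM_I by blast
qed

lemma RMM_preimage:
  fixes L :: "('a::finite) list set" and g :: "('b::finite) list \<Rightarrow> 'a list"
    and f :: "'b option \<Rightarrow> 'a option list"
  assumes "L \<in> RMM \<epsilon>" and f: "\<And>x. concat (map f (map Some x @ [None])) = map Some (g x) @ [None]"
  shows "{x. g x \<in> L} \<in> RMM \<epsilon>"
proof -
  obtain M c \<epsilon>' where M: "wf_mmqfa M" "\<epsilon> \<le> \<epsilon>'" "accepts_with M L c \<epsilon>'"
    using assms(1) by (rule RMM_E)
  define K where "K = Max (range (\<lambda>\<sigma>. length (f \<sigma>)))"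
  have len: "length (f \<sigma>) \<le> K" for \<sigma>
    unfolding K_def by (rule Max_ge) simp_all
  let ?M' = "block_sim M K f (\<lambda>_. False)"
  have "acc_prob ?M' x = acc_prob M (g x) - 0" for x
    unfolding acc_prob_block_sim[OF M(1) len] f by (simp add: acc_prob_run_acc)
  then have "accepts_with ?M' {x. g x \<in> L} (c - 0) \<epsilon>'"
    using M(3) by (intro accepts_with_shift)
  then show ?thesis
    using wf_block_sim[OF M(1) len] M(2) by (intro RMM_I)
qed

lemma monoid_hom_concat:
  assumes "monoid_hom h"
  shows "concat (map (\<lambda>a. h [a]) x) = h x"
proof (induction x)
  case Nil
  then show ?case using assms by (simp add: monoid_hom_def)
next
  case (Cons a x)
  have "h (a # x) = h [a] @ h x"
    using assms unfolding monoid_hom_def by (metis append_Cons append_Nil)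
  then show ?case using Cons by simp
qed

lemma RMM_inverse_hom:
  assumes "L \<in> RMM \<epsilon>" "monoid_hom h"
  shows "{x. h x \<in> L} \<in> RMM \<epsilon>"
proof (rule RMM_preimage[OF assms(1)])
  fix x
  show "concat (map (case_option [None] (\<lambda>a. map Some (h [a]))) (map Some x @ [None]))
      = map Some (h x) @ [None]"
    unfolding monoid_hom_concat[OF assms(2), of x, symmetric] by (simp add: o_def map_concat)
qed

lemma RMM_right_quotient:
  assumes "L \<in> RMM \<epsilon>"
  shows "{x. x @ w \<in> L} \<in> RMM \<epsilon>"
proof (rule RMM_preimage[OF assms])
  fix x
  show "concat (map (case_option (map Some w @ [None]) (\<lambda>a. [Some a])) (map Some x @ [None]))
      = map Some (x @ w) @ [None]"
    by (induction x) simp_all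
qed

lemma RMM_left_quotient:
  assumes "L \<in> RMM \<epsilon>"
  shows "{x. w @ x \<in> L} \<in> RMM \<epsilon>"
proof -
  obtain M c \<epsilon>' where M: "wf_mmqfa M" "\<epsilon> \<le> \<epsilon>'" "accepts_with M L c \<epsilon>'"
    using assms by (rule RMM_E)
  define e where "e = id_mat (init M)"
  define a where "a = run_acc M e (map Some w)"
  have "init M < dim M" using M(1) by (simp add: wf_mmqfa_def)
  then have "a + run_rej M e (map Some w) + sq_norm (dim M) (run_state M e (map Some w)) = 1"
    using run_conservation[OF M(1)] by (simp add: sq_norm_id_mat a_def e_def)
  then have "sq_norm (dim M) (run_state M e (map Some w)) \<le> 1"
    using run_acc_nonneg[of M e "map Some w"] run_rej_nonneg[of M e "map Some w"] a_def by linarith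
  then obtain M' :: "'a mmqfa" where M': "wf_mmqfa M'"
    "\<And>x. acc_prob M' x = run_acc M (run_state M e (map Some w)) (map Some x @ [None])"
    using ex_mmqfa_initial_state[OF M(1)] by blast
  have "acc_prob M' x = acc_prob M (w @ x) - a" for x
    by (simp only: M'(2)) (simp add: acc_prob_run_acc run_acc_append a_def e_def)
  then have "accepts_with M' {x. w @ x \<in> L} (c - a) \<epsilon>'"
    using M(3) by (intro accepts_with_shift)
  then show ?thesis using M'(1) M(2) by (intro RMM_I)
qed

theorem theorem4p1:
  fixes \<epsilon> :: real and L :: "('a::finite) list set"
  assumes "L \<in> RMM \<epsilon>"
  shows "UNIV - L \<in> RMM \<epsilon>
    \<and> (\<forall>h. monoid_hom h \<longrightarrow> {x. h x \<in> L} \<in> RMM \<epsilon>)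
    \<and> (\<forall>w. {x. w @ x \<in> L} \<in> RMM \<epsilon>)
    \<and> (\<forall>w. {x. x @ w \<in> L} \<in> RMM \<epsilon>)"
  using assms by (simp add: RMM_complement RMM_inverse_hom RMM_left_quotient RMM_right_quotient)

end
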